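(* GREEDY and RANKING have online competitive ratio $0$ for IFM: for every $\varepsilon>0$ there exists an IFM instance on which $\min_{i\in I}\mathbb E[Z_i]\le\varepsilon\cdot\mathrm{OPT}$ under GREEDY, and likewise an instance on which this holds under RANKING. Since IFM is the special case of GFM in which every group is a singleton $\{i\}$, the same holds for GFM.
   Context: Model. An instance consists of a finite bipartite graph $(I,J,E)$, where $I$ is the set of offline agents and $J$ the set of online agent types, with $|J|=T$, together with problem-specific data described below. For $i\in I$ let $\mathcal N_i=\{j\in J:(i,j)\in E\}$ and for $j\in J$ let $\mathcal N_j=\{i\in I:(i,j)\in E\}$; write $i\sim j$ (equivalently $j\sim i$) when $(i,j)\in E$. There are $T$ rounds $t=1,\dots,T$; in each round exactly one online agent arrives, whose type is drawn uniformly at random from $J$ (each type with probability $1/T$), independently across rounds. Each offline agent can be matched at most once. When an online agent of type $j$ arrives, an online algorithm (which knows the instance but not future arrivals) must immediately and irrevocably either reject it or match it to a currently unmatched $i\in\mathcal N_j$. Let $Z_i$ be the indicator that offline agent $i$ is matched by the end. Objectives: IFM maximizes $\min_{i\in I}\mathbb E[Z_i]$; GFM, given a collection $\mathcal G$ of nonempty subsets of $I$ (groups, possibly overlapping), maximizes $\min_{G\in\mathcal G}\frac1{|G|}\sum_{i\in G}\mathbb E[Z_i]$. A clairvoyant policy observes the entire arrival sequence before choosing (possibly randomly) which arrivals to match to which compatible unmatched offline agents; the clairvoyant optimum $\mathrm{OPT}$ is the supremum of the objective over clairvoyant policies. GREEDY (for IFM): when an online agent of type $j$ arrives, if it has at least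 one currently unmatched neighbor, match it to one chosen uniformly at random among its currently unmatched neighbors; otherwise reject. RANKING: before the online phase draw a uniformly random permutation $\pi$ of $I$; when an online agent of type $j$ arrives, match it to the currently unmatched neighbor of $j$ that comes earliest in $\pi$, or reject if none exists. *)

theory Defs
  imports "HOL-Probability.Probability"
begin

text \<open>Instances: offline agents I, online types J (both encoded as nat sets),
  edge set E \<subseteq> I \<times> J.  T = card J rounds.\<close>

definition valid_instance :: "nat set \<Rightarrow> nat set \<Rightarrow> (nat \<times> nat) set \<Rightarrow> bool" where
  "valid_instance I J E \<longleftrightarrow> finite I \<and> finite J \<and> I \<noteq> {} \<and> J \<noteq> {} \<and> E \<subseteq> I \<times> J"

definition valid_groups :: "nat set \<Rightarrow> nat set set \<Rightarrow> bool" where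
  "valid_groups I \<G> \<longleftrightarrow> \<G> \<noteq> {} \<and> (\<forall>G\<in>\<G>. G \<noteq> {} \<and> G \<subseteq> I)"

text \<open>Arrival sequence: T = card J i.i.d. uniform types, i.e. uniform over J^T.\<close>
definition arrivals :: "nat set \<Rightarrow> nat list pmf" where
  "arrivals J = pmf_of_set {\<omega>. length \<omega> = card J \<and> set \<omega> \<subseteq> J}"

definition nbrs :: "nat set \<Rightarrow> (nat \<times> nat) set \<Rightarrow> nat \<Rightarrow> nat set" where
  "nbrs I E j = {i \<in> I. (i, j) \<in> E}"

text \<open>GREEDY; the state is the set of matched offline agents.\<close>
definition greedy_step :: "nat set \<Rightarrow> (nat \<times> nat) set \<Rightarrow> nat \<Rightarrow> nat set \<Rightarrow> nat set pmf" where
  "greedy_step I E j S =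
     (let C = nbrs I E j - S in
      if C = {} then return_pmf S else map_pmf (\<lambda>i. insert i S) (pmf_of_set C))"

fun greedy_run :: "nat set \<Rightarrow> (nat \<times> nat) set \<Rightarrow> nat list \<Rightarrow> nat set \<Rightarrow> nat set pmf" where
  "greedy_run I E [] S = return_pmf S"
| "greedy_run I E (j # \<omega>) S = bind_pmf (greedy_step I E j S) (greedy_run I E \<omega>)"

definition greedy_dist :: "nat set \<Rightarrow> nat set \<Rightarrow> (nat \<times> nat) set \<Rightarrow> nat set pmf" where
  "greedy_dist I J E = bind_pmf (arrivals J) (\<lambda>\<omega>. greedy_run I E \<omega> {})"

text \<open>RANKING; the permutation of I is a list enumerating I without repetition.\<close>
fun ranking_run :: "nat set \<Rightarrow> (nat \<times> nat) set \<Rightarrow> nat list \<Rightarrow> nat list \<Rightarrow> nat set \<Rightarrow> nat set" where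
  "ranking_run I E \<pi> [] S = S"
| "ranking_run I E \<pi> (j # \<omega>) S =
     (case find (\<lambda>i. i \<in> nbrs I E j - S) \<pi> of
        None \<Rightarrow> ranking_run I E \<pi> \<omega> S
      | Some i \<Rightarrow> ranking_run I E \<pi> \<omega> (insert i S))"

definition ranking_dist :: "nat set \<Rightarrow> nat set \<Rightarrow> (nat \<times> nat) set \<Rightarrow> nat set pmf" where
  "ranking_dist I J E =
     bind_pmf (arrivals J) (\<lambda>\<omega>.
       map_pmf (\<lambda>\<pi>. ranking_run I E \<pi> \<omega> {}) (pmf_of_set {\<pi>. distinct \<pi> \<and> set \<pi> = I}))"

text \<open>E[Z_i] under an outcome distribution over sets of matched offline agents.\<close>
definition match_prob :: "nat set pmf \<Rightarrow> nat \<Rightarrow> real" where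
  "match_prob D i = measure_pmf.prob D {S. i \<in> S}"

text \<open>Clairvoyant policies: after seeing the whole arrival sequence \<omega>, choose (randomly)
  a set S of offline agents that is matched by some matching of the arrivals of \<omega>.\<close>
definition feasible_matched :: "nat set \<Rightarrow> (nat \<times> nat) set \<Rightarrow> nat list \<Rightarrow> nat set \<Rightarrow> bool" where
  "feasible_matched I E \<omega> S \<longleftrightarrow> S \<subseteq> I \<and>
     (\<exists>f. inj_on f S \<and> (\<forall>i\<in>S. f i < length \<omega> \<and> (i, \<omega> ! f i) \<in> E))"

definition clairvoyant_policy :: "nat set \<Rightarrow> nat set \<Rightarrow> (nat \<times> nat) set \<Rightarrow> (nat list \<Rightarrow> nat set pmf) \<Rightarrow> bool" where
  "clairvoyant_policy I J E \<sigma> \<longleftrightarrow>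
     (\<forall>\<omega>\<in>set_pmf (arrivals J). \<forall>S\<in>set_pmf (\<sigma> \<omega>). feasible_matched I E \<omega> S)"

definition clairvoyant_dist :: "nat set \<Rightarrow> (nat list \<Rightarrow> nat set pmf) \<Rightarrow> nat set pmf" where
  "clairvoyant_dist J \<sigma> = bind_pmf (arrivals J) \<sigma>"

definition ifm_obj :: "nat set \<Rightarrow> (nat \<Rightarrow> real) \<Rightarrow> real" where
  "ifm_obj I p = Min (p ` I)"

definition gfm_obj :: "nat set set \<Rightarrow> (nat \<Rightarrow> real) \<Rightarrow> real" where
  "gfm_obj \<G> p = Min ((\<lambda>G. (\<Sum>i\<in>G. p i) / real (card G)) ` \<G>)"

definition OPT :: "nat set \<Rightarrow> nat set \<Rightarrow> (nat \<times> nat) set \<Rightarrow> ((nat \<Rightarrow> real) \<Rightarrow> real) \<Rightarrow> real" where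
  "OPT I J E obj = (SUP \<sigma>\<in>{\<sigma>. clairvoyant_policy I J E \<sigma>}. obj (match_prob (clairvoyant_dist J \<sigma>)))"

end

theory Submission
  imports Defs "HOL-Analysis.Harmonic_Numbers"
begin

text \<open>Take \<open>n\<close> offline agents and \<open>n\<close> online types, where type \<open>0\<close> is adjacent to every
  agent and type \<open>j \<noteq> 0\<close> only to agent \<open>j\<close>. Agent \<open>0\<close> can only be matched to an arrival of
  type \<open>0\<close>; when \<open>k\<close> rounds remain, at least \<open>k\<close> agents are still unmatched, so GREEDY picks
  agent \<open>0\<close> with probability at most \<open>1 / k\<close>. Hence agent \<open>0\<close> is matched with probability at
  most \<open>H\<^sub>n / n \<le> 2 / sqrt n\<close>, while matching every arriving type \<open>j\<close> to agent \<open>j\<close> is a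
  clairvoyant policy matching each agent with probability \<open>1 - (1 - 1/n)\<^sup>n \<ge> 1/2\<close>.
  On this instance RANKING has the same law as GREEDY: the first unmatched agent of a uniform
  permutation is uniform, and the rest of the permutation stays uniform.\<close>

lemma harm_le_two_sqrt: "harm n \<le> (2 * sqrt (real n) :: real)"
proof (induction n)
  case 0 then show ?case by (simp add: harm_def)
next
  case (Suc n)
  define a b where "a = sqrt (real n + 1)" and "b = sqrt (real n)"
  have "a \<ge> 1" "b \<le> a" "b \<ge> 0" by (simp_all add: a_def b_def)
  have "a * a = real n + 1" "b * b = real n" by (simp_all add: a_def b_def)
  then have "(a - b) * (a + b) = 1" by (simp add: algebra_simps)
  have "inverse (real (Suc n)) = 1 / (a * a)"
    using \<open>a * a = _\<close> by (simp add: divide_inverse)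
  also have "\<dots> \<le> 1 / a"
    using \<open>a \<ge> 1\<close> by (intro divide_left_mono) (auto intro: order.trans[of _ 1] simp: mult_le_cancel_left1)
  also have "\<dots> \<le> 2 / (a + b)"
    using \<open>b \<le> a\<close> \<open>b \<ge> 0\<close> \<open>a \<ge> 1\<close> by (simp add: field_simps)
  also have "\<dots> = 2 * (a - b)"
    using \<open>(a - b) * (a + b) = 1\<close> \<open>b \<ge> 0\<close> \<open>a \<ge> 1\<close> by (simp add: field_simps)
  finally show ?case using Suc.IH by (simp add: harm_Suc a_def b_def algebra_simps)
qed

lemma one_minus_inverse_power_le_half:
  assumes "n \<ge> 1"
  shows "(1 - 1 / real n) ^ n \<le> 1 / 2"
proof -
  have "(1 - 1 / real n) ^ n \<le> exp (- 1 / real n) ^ n"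
    using assms exp_ge_add_one_self[of "- 1 / real n"] by (intro power_mono) auto
  also have "\<dots> = exp (- 1)"
    using assms by (simp add: exp_of_nat_mult[symmetric])
  also have "\<dots> \<le> 1 / 2"
    using exp_ge_add_one_self[of 1] by (simp add: exp_minus field_simps)
  finally show ?thesis .
qed

lemma sum_le_with_exception:
  fixes f :: "'a \<Rightarrow> real"
  assumes "finite C" "c \<in> C" "f c \<le> a + b" "\<And>i. i \<in> C - {c} \<Longrightarrow> f i \<le> b"
  shows "sum f C \<le> a + real (card C) * b"
proof -
  have "card C > 0" using assms(1,2) card_gt_0_iff by blast
  have "sum f C = f c + sum f (C - {c})" using assms(1,2) by (rule sum.remove)
  also have "\<dots> \<le> (a + b) + real (card (C - {c})) * b"
    using assms(3,4) sum_mono[of "C - {c}" f "\<lambda>_. b"] by simp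
  also have "\<dots> = a + real (card C) * b"
    using assms(1,2) \<open>card C > 0\<close> by (simp add: of_nat_diff algebra_simps)
  finally show ?thesis .
qed

section \<open>Uniformly random arrival sequences\<close>

lemma prob_bind_pmf_le:
  assumes "\<And>x. x \<in> set_pmf p \<Longrightarrow> measure_pmf.prob (f x) A \<le> c"
  shows "measure_pmf.prob (bind_pmf p f) A \<le> c"
proof -
  have "measure_pmf.prob (bind_pmf p f) A = pmf (bind_pmf p (\<lambda>x. map_pmf (\<lambda>y. y \<in> A) (f x))) True"
    by (simp add: map_bind_pmf[symmetric] pmf_map vimage_def)
  also have "\<dots> = measure_pmf.expectation p (\<lambda>x. measure_pmf.prob (f x) A)"
    by (simp add: pmf_bind pmf_map vimage_def)
  also have "\<dots> \<le> c"
    using assms by (intro measure_pmf.integral_le_const measure_pmf.integrable_const_bound[where B=1])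
      (auto simp: AE_measure_pmf_iff)
  finally show ?thesis .
qed

lemma prob_bind_pmf_of_set:
  assumes "finite A" "A \<noteq> {}"
  shows "measure_pmf.prob (bind_pmf (pmf_of_set A) f) X = (\<Sum>a\<in>A. measure_pmf.prob (f a) X) / card A"
proof -
  have prob_eq: "measure_pmf.prob p X = pmf (map_pmf (\<lambda>x. x \<in> X) p) True" for p :: "'b pmf"
    by (simp add: pmf_map vimage_def)
  show ?thesis using assms by (simp add: prob_eq map_bind_pmf pmf_bind_pmf_of_set)
qed

lemma pmf_of_set_lists_Suc:
  assumes "finite A" "A \<noteq> {}"
  shows "pmf_of_set {\<omega>. length \<omega> = Suc k \<and> set \<omega> \<subseteq> A} =
     bind_pmf (pmf_of_set A) (\<lambda>x. map_pmf (Cons x) (pmf_of_set {\<omega>. length \<omega> = k \<and> set \<omega> \<subseteq> A}))"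
proof -
  let ?L = "{\<omega>. length \<omega> = k \<and> set \<omega> \<subseteq> A}"
  have fin: "finite ?L" using finite_lists_length_eq[OF assms(1), of k] by (simp add: conj_commute)
  have ne: "?L \<noteq> {}" using assms by (auto intro!: exI[of _ "replicate k (SOME x. x \<in> A)"] simp: some_in_eq)
  have card: "card ?L = card A ^ k" using card_lists_length_eq[OF assms(1)] by (simp add: conj_commute)
  have "{\<omega>. length \<omega> = Suc k \<and> set \<omega> \<subseteq> A} = (\<Union>x\<in>A. Cons x ` ?L)"
    by (auto simp: length_Suc_conv)
  also have "pmf_of_set \<dots> = bind_pmf (pmf_of_set A) (\<lambda>x. pmf_of_set (Cons x ` ?L))"
    using fin ne assms card
    by (intro pmf_of_set_UN[where n="card A ^ k"]) (auto simp: card_image disjoint_family_on_def)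
  finally show ?thesis using fin ne by (simp add: map_pmf_of_set_inj)
qed

lemma prob_lists_not_mem:
  assumes "finite A" "a \<in> A"
  shows "measure_pmf.prob (pmf_of_set {\<omega>. length \<omega> = k \<and> set \<omega> \<subseteq> A}) {\<omega>. a \<notin> set \<omega>}
           = (1 - 1 / real (card A)) ^ k"
proof -
  let ?L = "\<lambda>B. {\<omega>. length \<omega> = k \<and> set \<omega> \<subseteq> B}"
  have card: "card (?L B) = card B ^ k" if "finite B" for B
    using card_lists_length_eq[OF that] by (simp add: conj_commute)
  have "finite (?L A)" using finite_lists_length_eq[OF assms(1)] by (simp add: conj_commute)
  moreover have "?L A \<noteq> {}" using assms by (auto intro!: exI[of _ "replicate k a"])
  moreover have "?L A \<inter> {\<omega>. a \<notin> set \<omega>} = ?L (A - {a})" by auto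
  moreover have "A \<noteq> {}" "card A > 0" using assms card_gt_0_iff by blast+
  ultimately show ?thesis
    using assms card[of A] card[of "A - {a}"]
    by (simp add: measure_pmf_of_set of_nat_diff power_divide[symmetric] diff_divide_distrib)
qed

lemma set_pmf_arrivals:
  assumes "finite J"
  shows "set_pmf (arrivals J) = {\<omega>. length \<omega> = card J \<and> set \<omega> \<subseteq> J}"
proof -
  have "finite {\<omega>. length \<omega> = card J \<and> set \<omega> \<subseteq> J}"
    using finite_lists_length_eq[OF assms, of "card J"] by (simp add: conj_commute)
  moreover have "{\<omega>. length \<omega> = card J \<and> set \<omega> \<subseteq> J} \<noteq> {}"
    by (cases "J = {}") (auto intro!: exI[of _ "replicate (card J) (SOME j. j \<in> J)"] simp: some_in_eq)
  ultimately show ?thesis unfolding arrivals_def by (rule set_pmf_of_set[rotated])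
qed

section \<open>Greedy and an agent reachable only through a hub type\<close>

lemma set_pmf_greedy_step:
  assumes "finite I" "S' \<in> set_pmf (greedy_step I E j S)"
  shows "S' = S \<or> (\<exists>i \<in> nbrs I E j - S. S' = insert i S)"
proof -
  have "finite (nbrs I E j - S)" using assms(1) by (simp add: nbrs_def)
  then show ?thesis using assms(2) by (auto simp: greedy_step_def Let_def split: if_splits)
qed

lemma greedy_run_pmf_of_set_lists_Suc:
  assumes "finite J" "J \<noteq> {}"
  shows "bind_pmf (pmf_of_set {\<omega>. length \<omega> = Suc k \<and> set \<omega> \<subseteq> J}) (\<lambda>\<omega>. greedy_run I E \<omega> S) =
    bind_pmf (pmf_of_set J) (\<lambda>j. bind_pmf (greedy_step I E j S) (\<lambda>S'.
      bind_pmf (pmf_of_set {\<omega>. length \<omega> = k \<and> set \<omega> \<subseteq> J}) (\<lambda>\<omega>. greedy_run I E \<omega> S')))"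
  using assms by (simp add: pmf_of_set_lists_Suc bind_assoc_pmf bind_map_pmf)
    (rule bind_pmf_cong[OF refl], rule bind_commute_pmf)

lemma prob_greedy_step_hub_le:
  assumes "finite I" "nbrs I E h = I" "a \<in> I - S" "0 < c" "c \<le> real (card (I - S))" "0 \<le> B"
    and others: "\<And>i. i \<in> I - S - {a} \<Longrightarrow> measure_pmf.prob (F (insert i S)) A \<le> B"
  shows "measure_pmf.prob (bind_pmf (greedy_step I E h S) F) A \<le> 1 / c + B"
proof -
  have "finite (I - S)" "I - S \<noteq> {}" using assms(1,3) by auto
  have "measure_pmf.prob (F (insert a S)) A \<le> 1 + B"
    using measure_pmf.prob_le_1[of "F (insert a S)" A] \<open>0 \<le> B\<close> by linarith
  then have "(\<Sum>i\<in>I - S. measure_pmf.prob (F (insert i S)) A) \<le> 1 + card (I - S) * B"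
    using \<open>finite (I - S)\<close> assms(3) others by (intro sum_le_with_exception) auto
  moreover have "measure_pmf.prob (bind_pmf (greedy_step I E h S) F) A
      = (\<Sum>i\<in>I - S. measure_pmf.prob (F (insert i S)) A) / card (I - S)"
    using \<open>finite (I - S)\<close> \<open>I - S \<noteq> {}\<close>
    by (simp add: greedy_step_def assms(2) bind_map_pmf prob_bind_pmf_of_set)
  ultimately have "measure_pmf.prob (bind_pmf (greedy_step I E h S) F) A \<le> (1 + card (I - S) * B) / card (I - S)"
    using assms(4,5) by (simp add: divide_right_mono)
  also have "\<dots> = 1 / card (I - S) + B"
    using assms(4,5) by (simp add: add_divide_distrib)
  also have "\<dots> \<le> 1 / c + B"
    using assms(4,5) by (simp add: frac_le)
  finally show ?thesis .
qed

lemma greedy_run_prob_matched_le_harm: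
  assumes "finite I" "finite J" "h \<in> J" "a \<in> I" "nbrs I E h = I"
    and only_h: "\<And>j. j \<in> J - {h} \<Longrightarrow> (a, j) \<notin> E"
  shows "S \<subseteq> I \<Longrightarrow> a \<notin> S \<Longrightarrow> card S + k \<le> card I \<Longrightarrow>
    measure_pmf.prob (bind_pmf (pmf_of_set {\<omega>. length \<omega> = k \<and> set \<omega> \<subseteq> J})
      (\<lambda>\<omega>. greedy_run I E \<omega> S)) {T. a \<in> T} \<le> harm k / card J"
proof (induction k arbitrary: S)
  case 0
  have "{\<omega>. length \<omega> = 0 \<and> set \<omega> \<subseteq> J} = {[]}" by auto
  with 0 show ?case by (simp add: pmf_of_set_singleton bind_return_pmf measure_return harm_def)
next
  case (Suc k)
  let ?run = "\<lambda>S. bind_pmf (pmf_of_set {\<omega>. length \<omega> = k \<and> set \<omega> \<subseteq> J}) (\<lambda>\<omega>. greedy_run I E \<omega> S)"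
  let ?Q = "\<lambda>j. measure_pmf.prob (bind_pmf (greedy_step I E j S) ?run) {T. a \<in> T}"
  let ?B = "harm k / real (card J) :: real"
  have "J \<noteq> {}" using assms(3) by blast
  have "finite S" using Suc.prems(1) assms(1) finite_subset by blast
  have IH: "measure_pmf.prob (?run (insert i S)) {T. a \<in> T} \<le> ?B" if "i \<in> I - S" "i \<noteq> a" for i
    using that Suc.prems \<open>finite S\<close> by (intro Suc.IH) auto
  have Q_other: "?Q j \<le> ?B" if "j \<in> J - {h}" for j
  proof (rule prob_bind_pmf_le)
    fix S' assume "S' \<in> set_pmf (greedy_step I E j S)"
    with set_pmf_greedy_step[OF assms(1)] consider "S' = S" | i where "i \<in> nbrs I E j - S" "S' = insert i S"
      by blast
    then show "measure_pmf.prob (?run S') {T. a \<in> T} \<le> ?B"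
    proof cases
      case 1 then show ?thesis using Suc.prems by (intro Suc.IH) auto
    next
      case 2 then show ?thesis using IH only_h[OF that] by (auto simp: nbrs_def)
    qed
  qed
  have Q_h: "?Q h \<le> 1 / real (Suc k) + ?B"
    using Suc.prems assms(1,4,5) IH \<open>finite S\<close>
    by (intro prob_greedy_step_hub_le) (auto simp: card_Diff_subset harm_nonneg)
  have "measure_pmf.prob (bind_pmf (pmf_of_set {\<omega>. length \<omega> = Suc k \<and> set \<omega> \<subseteq> J})
      (\<lambda>\<omega>. greedy_run I E \<omega> S)) {T. a \<in> T} = (\<Sum>j\<in>J. ?Q j) / card J"
    using assms(2) \<open>J \<noteq> {}\<close> by (simp add: greedy_run_pmf_of_set_lists_Suc prob_bind_pmf_of_set)
  also have "\<dots> \<le> (1 / real (Suc k) + card J * ?B) / card J"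
    using assms(2,3) Q_h Q_other by (intro divide_right_mono sum_le_with_exception) auto
  also have "\<dots> = harm (Suc k) / card J"
    using assms(2) \<open>J \<noteq> {}\<close> by (simp add: harm_Suc inverse_eq_divide)
  finally show ?case .
qed

section \<open>Ranking versus greedy\<close>

lemma find_filter_notin:
  "(\<And>x. x \<in> S \<Longrightarrow> \<not> P x) \<Longrightarrow> find P (filter (\<lambda>x. x \<notin> S) xs) = find P xs"
  by (induction xs) auto

lemma ranking_run_filter_matched:
  "ranking_run I E \<pi> \<omega> S = ranking_run I E (filter (\<lambda>x. x \<notin> S) \<pi>) \<omega> S"
proof (induction \<omega> arbitrary: S \<pi>)
  case Nil then show ?case by simp
next
  case (Cons j \<omega>)
  have find_eq: "find (\<lambda>i. i \<in> nbrs I E j - S) (filter (\<lambda>x. x \<notin> S) \<pi>) = find (\<lambda>i. i \<in> nbrs I E j - S) \<pi>"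
    by (rule find_filter_notin) auto
  show ?case
  proof (cases "find (\<lambda>i. i \<in> nbrs I E j - S) \<pi>")
    case None
    then show ?thesis using find_eq Cons.IH[where S=S and \<pi>=\<pi>] by simp
  next
    case (Some i)
    let ?T = "insert i S"
    have "ranking_run I E \<pi> (j # \<omega>) S = ranking_run I E (filter (\<lambda>x. x \<notin> ?T) \<pi>) \<omega> ?T"
      using Some Cons.IH[where S="?T" and \<pi>=\<pi>] by simp
    also have "filter (\<lambda>x. x \<notin> ?T) \<pi> = filter (\<lambda>x. x \<notin> ?T) (filter (\<lambda>x. x \<notin> S) \<pi>)"
      by (auto simp: filter_filter intro!: filter_cong)
    also have "ranking_run I E \<dots> \<omega> ?T = ranking_run I E (filter (\<lambda>x. x \<notin> S) \<pi>) (j # \<omega>) S"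
      using Some find_eq Cons.IH[where S="?T" and \<pi>="filter (\<lambda>x. x \<notin> S) \<pi>"] by simp
    finally show ?thesis .
  qed
qed

lemma map_pmf_filter_permutations_of_set:
  assumes "finite A"
  shows "map_pmf (filter P) (pmf_of_set (permutations_of_set A)) = pmf_of_set (permutations_of_set {x \<in> A. P x})"
proof -
  have "map_pmf (filter P) (pmf_of_set (permutations_of_set A)) =
      map_pmf fst (map_pmf (partition P) (pmf_of_set (permutations_of_set A)))"
    by (simp add: map_pmf_comp partition_filter1 o_def)
  also have "\<dots> = pmf_of_set (permutations_of_set {x \<in> A. P x})"
    using assms by (simp add: partition_random_permutations map_fst_pair_pmf)
  finally show ?thesis .
qed

lemma ranking_run_Cons_match_head:
  assumes "x \<in> nbrs I E j - S"
  shows "ranking_run I E (x # \<pi>) (j # \<omega>) S = ranking_run I E \<pi> \<omega> (insert x S)"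
proof -
  have "ranking_run I E (x # \<pi>) (j # \<omega>) S = ranking_run I E (x # \<pi>) \<omega> (insert x S)"
    using assms by simp
  also have "\<dots> = ranking_run I E \<pi> \<omega> (insert x S)"
    using ranking_run_filter_matched[of I E "x # \<pi>" \<omega> "insert x S"]
      ranking_run_filter_matched[of I E \<pi> \<omega> "insert x S"] by simp
  finally show ?thesis .
qed

lemma ranking_run_Cons_unique_nbr:
  assumes "nbrs I E j - S = {i}" "i \<in> set \<pi>"
  shows "ranking_run I E \<pi> (j # \<omega>) S = ranking_run I E (filter (\<lambda>x. x \<notin> insert i S) \<pi>) \<omega> (insert i S)"
proof -
  have "find (\<lambda>x. x \<in> nbrs I E j - S) \<pi> = Some i"
    using assms(2) unfolding assms(1) by (induction \<pi>) auto
  then show ?thesis by (simp add: ranking_run_filter_matched[of I E \<pi> \<omega> "insert i S"])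
qed

lemma ranking_run_perm_step:
  assumes "finite I" and nbrs_shape: "nbrs I E j = I \<or> (\<exists>i. nbrs I E j \<subseteq> {i})"
  shows "map_pmf (\<lambda>\<pi>. ranking_run I E \<pi> (j # \<omega>) S) (pmf_of_set (permutations_of_set (I - S))) =
    bind_pmf (greedy_step I E j S)
      (\<lambda>S'. map_pmf (\<lambda>\<pi>. ranking_run I E \<pi> \<omega> S') (pmf_of_set (permutations_of_set (I - S'))))"
    (is "?lhs = ?rhs")
proof -
  let ?C = "nbrs I E j - S"
  let ?P = "\<lambda>A. pmf_of_set (permutations_of_set A)"
  have fin: "finite (I - S)" using assms(1) by simp
  consider (none) "?C = {}" | (single) i where "?C = {i}" | (hub) "?C = I - S" "I - S \<noteq> {}"
    using nbrs_shape by blast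
  then show ?thesis
  proof cases
    case none
    have find_none: "find (\<lambda>i. i \<in> nbrs I E j \<and> i \<notin> S) \<pi> = None" for \<pi>
      using none by (auto simp: find_None_iff)
    have "greedy_step I E j S = return_pmf S" using none by (simp add: greedy_step_def)
    then show ?thesis by (simp add: find_none bind_return_pmf)
  next
    case (single i)
    have "i \<in> I - S" using single by (auto simp: nbrs_def)
    with fin have "i \<in> set \<pi>" if "\<pi> \<in> set_pmf (?P (I - S))" for \<pi>
      using that by (auto dest: permutations_of_setD)
    then have "?lhs = map_pmf (\<lambda>\<pi>. ranking_run I E (filter (\<lambda>x. x \<notin> insert i S) \<pi>) \<omega> (insert i S)) (?P (I - S))"
      by (intro map_pmf_cong refl ranking_run_Cons_unique_nbr[OF single])
    also have "\<dots> = map_pmf (\<lambda>\<pi>. ranking_run I E \<pi> \<omega> (insert i S))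
        (map_pmf (filter (\<lambda>x. x \<notin> insert i S)) (?P (I - S)))"
      by (simp add: map_pmf_comp)
    also have "{x \<in> I - S. x \<notin> insert i S} = I - insert i S" by auto
    then have "map_pmf (filter (\<lambda>x. x \<notin> insert i S)) (?P (I - S)) = ?P (I - insert i S)"
      using map_pmf_filter_permutations_of_set[OF fin] by metis
    finally show ?thesis using single by (simp add: greedy_step_def pmf_of_set_singleton bind_return_pmf)
  next
    case hub
    have "?lhs = bind_pmf (pmf_of_set (I - S))
        (\<lambda>x. map_pmf (\<lambda>\<pi>. ranking_run I E (x # \<pi>) (j # \<omega>) S) (?P (I - S - {x})))"
      using fin hub by (simp add: random_permutation_of_set map_bind_pmf map_pmf_def[symmetric] map_pmf_comp o_def)
    also have "\<dots> = bind_pmf (pmf_of_set (I - S))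
        (\<lambda>x. map_pmf (\<lambda>\<pi>. ranking_run I E \<pi> \<omega> (insert x S)) (?P (I - insert x S)))"
    proof (rule bind_pmf_cong[OF refl])
      fix x assume "x \<in> set_pmf (pmf_of_set (I - S))"
      then have "x \<in> ?C" using fin hub by simp
      have "I - S - {x} = I - insert x S" by auto
      then show "map_pmf (\<lambda>\<pi>. ranking_run I E (x # \<pi>) (j # \<omega>) S) (?P (I - S - {x})) =
          map_pmf (\<lambda>\<pi>. ranking_run I E \<pi> \<omega> (insert x S)) (?P (I - insert x S))"
        by (simp only: ranking_run_Cons_match_head[OF \<open>x \<in> ?C\<close>])
    qed
    finally show ?thesis using hub by (simp add: greedy_step_def bind_map_pmf)
  qed
qed

lemma ranking_run_perm_eq_greedy_run:
  assumes "finite I" "\<And>j. nbrs I E j = I \<or> (\<exists>i. nbrs I E j \<subseteq> {i})"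
  shows "map_pmf (\<lambda>\<pi>. ranking_run I E \<pi> \<omega> S) (pmf_of_set (permutations_of_set (I - S))) = greedy_run I E \<omega> S"
proof (induction \<omega> arbitrary: S)
  case Nil then show ?case by (simp add: map_pmf_const)
next
  case (Cons j \<omega>)
  have "map_pmf (\<lambda>\<pi>. ranking_run I E \<pi> (j # \<omega>) S) (pmf_of_set (permutations_of_set (I - S))) =
    bind_pmf (greedy_step I E j S)
      (\<lambda>S'. map_pmf (\<lambda>\<pi>. ranking_run I E \<pi> \<omega> S') (pmf_of_set (permutations_of_set (I - S'))))"
    using assms by (intro ranking_run_perm_step)
  also have "\<dots> = greedy_run I E (j # \<omega>) S" by (simp add: Cons.IH)
  finally show ?case .
qed

lemma ranking_dist_eq_greedy_dist:
  assumes "finite I" "\<And>j. nbrs I E j = I \<or> (\<exists>i. nbrs I E j \<subseteq> {i})"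
  shows "ranking_dist I J E = greedy_dist I J E"
proof -
  have "{\<pi>. distinct \<pi> \<and> set \<pi> = I} = permutations_of_set (I - {})"
    by (auto simp: permutations_of_set_def)
  then show ?thesis
    using ranking_run_perm_eq_greedy_run[OF assms, where S="{}"] by (simp add: ranking_dist_def greedy_dist_def)
qed

section \<open>The clairvoyant benchmark\<close>

lemma feasible_matched_set:
  assumes "set \<omega> \<subseteq> I" "\<And>j. j \<in> set \<omega> \<Longrightarrow> (j, j) \<in> E"
  shows "feasible_matched I E \<omega> (set \<omega>)"
proof -
  define f where "f i = (LEAST k. k < length \<omega> \<and> \<omega> ! k = i)" for i
  have f: "f i < length \<omega> \<and> \<omega> ! f i = i" if "i \<in> set \<omega>" for i
    using that unfolding f_def in_set_conv_nth by (metis (mono_tags, lifting) LeastI)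
  then have "inj_on f (set \<omega>)" by (metis inj_onI)
  with f assms show ?thesis unfolding feasible_matched_def by auto
qed

lemma clairvoyant_policy_match_arrivals:
  assumes "finite J" "J \<subseteq> I" "\<And>j. j \<in> J \<Longrightarrow> (j, j) \<in> E"
  shows "clairvoyant_policy I J E (\<lambda>\<omega>. return_pmf (set \<omega>))"
  using assms by (auto simp: clairvoyant_policy_def set_pmf_arrivals intro!: feasible_matched_set)

lemma match_prob_match_arrivals:
  assumes "finite J" "j \<in> J"
  shows "match_prob (clairvoyant_dist J (\<lambda>\<omega>. return_pmf (set \<omega>))) j = 1 - (1 - 1 / real (card J)) ^ card J"
proof -
  let ?A = "pmf_of_set {\<omega>. length \<omega> = card J \<and> set \<omega> \<subseteq> J}"
  have "match_prob (clairvoyant_dist J (\<lambda>\<omega>. return_pmf (set \<omega>))) j = measure_pmf.prob ?A {\<omega>. j \<in> set \<omega>}"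
    by (simp add: match_prob_def clairvoyant_dist_def arrivals_def map_pmf_def[symmetric] vimage_def)
  also have "{\<omega>. j \<in> set \<omega>} = UNIV - {\<omega>. j \<notin> set \<omega>}" by auto
  also have "measure_pmf.prob ?A \<dots> = 1 - (1 - 1 / real (card J)) ^ card J"
    using assms measure_pmf.prob_compl[of "{\<omega>. j \<notin> set \<omega>}" ?A] by (simp add: prob_lists_not_mem)
  finally show ?thesis .
qed

lemma ifm_obj_match_prob_le_1:
  assumes "finite I" "I \<noteq> {}"
  shows "ifm_obj I (match_prob D) \<le> 1"
proof -
  obtain i where "i \<in> I" using assms(2) by blast
  with assms have "ifm_obj I (match_prob D) \<le> match_prob D i" unfolding ifm_obj_def by simp
  also have "\<dots> \<le> 1" unfolding match_prob_def by simp
  finally show ?thesis .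
qed

lemma ifm_obj_le_OPT:
  assumes "finite I" "I \<noteq> {}" "clairvoyant_policy I J E \<sigma>"
  shows "ifm_obj I (match_prob (clairvoyant_dist J \<sigma>)) \<le> OPT I J E (ifm_obj I)"
  unfolding OPT_def using assms ifm_obj_match_prob_le_1[OF assms(1,2)]
  by (intro cSUP_upper bdd_aboveI[of _ 1]) auto

lemma gfm_obj_singletons: "gfm_obj ((\<lambda>i. {i}) ` I) = ifm_obj I"
  by (auto simp: gfm_obj_def ifm_obj_def image_image)

lemma valid_groups_singletons: "I \<noteq> {} \<Longrightarrow> valid_groups I ((\<lambda>i. {i}) ` I)"
  by (auto simp: valid_groups_def)

section \<open>The hub instance\<close>

definition hub_edges :: "nat \<Rightarrow> (nat \<times> nat) set" where
  "hub_edges n = {(i, i) | i. i < n} \<union> {(i, 0) | i. i < n}"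

lemma valid_instance_hub: "n > 0 \<Longrightarrow> valid_instance {0..<n} {0..<n} (hub_edges n)"
  by (auto simp: valid_instance_def hub_edges_def)

lemma nbrs_hub_edges: "nbrs {0..<n} (hub_edges n) j = (if j = 0 then {0..<n} else {0..<n} \<inter> {j})"
  by (auto simp: nbrs_def hub_edges_def)

lemma OPT_hub_ge_half:
  assumes "n > 0"
  shows "OPT {0..<n} {0..<n} (hub_edges n) (ifm_obj {0..<n}) \<ge> 1 / 2"
proof -
  let ?\<sigma> = "\<lambda>\<omega>. return_pmf (set \<omega>)"
  have "1 / 2 \<le> ifm_obj {0..<n} (match_prob (clairvoyant_dist {0..<n} ?\<sigma>))"
    using assms one_minus_inverse_power_le_half[of n]
    by (simp add: ifm_obj_def match_prob_match_arrivals)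
  also have "\<dots> \<le> OPT {0..<n} {0..<n} (hub_edges n) (ifm_obj {0..<n})"
    using assms by (intro ifm_obj_le_OPT clairvoyant_policy_match_arrivals) (auto simp: hub_edges_def)
  finally show ?thesis .
qed

lemma greedy_hub_match_prob_le:
  assumes "n > 0"
  shows "match_prob (greedy_dist {0..<n} {0..<n} (hub_edges n)) 0 \<le> 2 / sqrt (real n)"
proof -
  let ?I = "{0..<n}"
  have "nbrs ?I (hub_edges n) 0 = ?I" by (simp add: nbrs_hub_edges)
  moreover have "(0, j) \<notin> hub_edges n" if "j \<in> ?I - {0}" for j using that by (auto simp: hub_edges_def)
  ultimately have "match_prob (greedy_dist ?I ?I (hub_edges n)) 0 \<le> harm (card ?I) / real (card ?I)"
    unfolding match_prob_def greedy_dist_def arrivals_def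
    using assms by (intro greedy_run_prob_matched_le_harm[where h=0]) auto
  also have "\<dots> \<le> 2 * sqrt (real n) / real n"
    using harm_le_two_sqrt[of n] by (simp add: divide_right_mono)
  also have "\<dots> = 2 / sqrt (real n)"
    using assms by (simp add: field_simps real_sqrt_mult[symmetric])
  finally show ?thesis .
qed

lemma greedy_hub_ifm_obj_le_OPT:
  assumes "n > 0"
  shows "ifm_obj {0..<n} (match_prob (greedy_dist {0..<n} {0..<n} (hub_edges n)))
           \<le> 4 / sqrt (real n) * OPT {0..<n} {0..<n} (hub_edges n) (ifm_obj {0..<n})"
proof -
  have "ifm_obj {0..<n} (match_prob (greedy_dist {0..<n} {0..<n} (hub_edges n)))
      \<le> match_prob (greedy_dist {0..<n} {0..<n} (hub_edges n)) 0"
    unfolding ifm_obj_def using assms by simp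
  also have "\<dots> \<le> 4 / sqrt (real n) * (1 / 2)" using greedy_hub_match_prob_le[OF assms] by simp
  also have "\<dots> \<le> 4 / sqrt (real n) * OPT {0..<n} {0..<n} (hub_edges n) (ifm_obj {0..<n})"
    using OPT_hub_ge_half[OF assms] by (intro mult_left_mono) auto
  finally show ?thesis .
qed

lemma ranking_dist_hub_eq_greedy_dist:
  "ranking_dist {0..<n} {0..<n} (hub_edges n) = greedy_dist {0..<n} {0..<n} (hub_edges n)"
  by (rule ranking_dist_eq_greedy_dist) (auto simp: nbrs_hub_edges)

lemma exists_four_div_sqrt_le:
  fixes \<epsilon> :: real
  assumes "\<epsilon> > 0"
  obtains n :: nat where "n > 0" "4 / sqrt (real n) \<le> \<epsilon>"
proof -
  obtain n :: nat where n: "(4 / \<epsilon>)\<^sup>2 < real n" using reals_Archimedean2 by blast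
  then have "n > 0" using not_less_iff_gr_or_eq by fastforce
  moreover have "4 / \<epsilon> < sqrt (real n)" using n by (rule real_less_rsqrt)
  then have "4 / sqrt (real n) \<le> \<epsilon>" using assms \<open>n > 0\<close> by (simp add: field_simps)
  ultimately show ?thesis using that by blast
qed

lemma hub_instance_ratio_le:
  fixes \<epsilon> :: real
  assumes "\<epsilon> > 0"
  shows "\<exists>n > 0. OPT {0..<n} {0..<n} (hub_edges n) (ifm_obj {0..<n}) > 0 \<and>
    ifm_obj {0..<n} (match_prob (greedy_dist {0..<n} {0..<n} (hub_edges n)))
      \<le> \<epsilon> * OPT {0..<n} {0..<n} (hub_edges n) (ifm_obj {0..<n})"
proof -
  obtain n :: nat where "n > 0" and n: "4 / sqrt (real n) \<le> \<epsilon>"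
    using assms by (rule exists_four_div_sqrt_le)
  have "OPT {0..<n} {0..<n} (hub_edges n) (ifm_obj {0..<n}) > 0"
    using OPT_hub_ge_half[OF \<open>n > 0\<close>] by linarith
  with greedy_hub_ifm_obj_le_OPT[OF \<open>n > 0\<close>] n \<open>n > 0\<close> show ?thesis
    by (meson mult_right_mono less_imp_le order_trans)
qed

theorem theorem1:
  shows "\<forall>\<epsilon>::real. \<epsilon> > 0 \<longrightarrow>
    (\<exists>I J E. valid_instance I J E \<and> OPT I J E (ifm_obj I) > 0 \<and>
        ifm_obj I (match_prob (greedy_dist I J E)) \<le> \<epsilon> * OPT I J E (ifm_obj I)) \<and>
    (\<exists>I J E. valid_instance I J E \<and> OPT I J E (ifm_obj I) > 0 \<and>
        ifm_obj I (match_prob (ranking_dist I J E)) \<le> \<epsilon> * OPT I J E (ifm_obj I)) \<and>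
    (\<exists>I J E \<G>. valid_instance I J E \<and> valid_groups I \<G> \<and> OPT I J E (gfm_obj \<G>) > 0 \<and>
        gfm_obj \<G> (match_prob (greedy_dist I J E)) \<le> \<epsilon> * OPT I J E (gfm_obj \<G>)) \<and>
    (\<exists>I J E \<G>. valid_instance I J E \<and> valid_groups I \<G> \<and> OPT I J E (gfm_obj \<G>) > 0 \<and>
        gfm_obj \<G> (match_prob (ranking_dist I J E)) \<le> \<epsilon> * OPT I J E (gfm_obj \<G>))"
proof -
  have "{0..<n} \<noteq> {}" if "n > 0" for n :: nat using that by simp
  then show ?thesis
    using hub_instance_ratio_le valid_instance_hub valid_groups_singletons gfm_obj_singletons
      ranking_dist_hub_eq_greedy_dist
    by metis
qed
end
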